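(* For every subclass $\mathbf{X}$ of the class $\mathbf{M}$ of all metric spaces, the following are equivalent: (i) $\mathbf{X}\subseteq\mathbf{Dis}$, there exists $(Y,\rho)\in\mathbf{X}$ with $\operatorname{card}(Y)\geqslant 2$, and $\mathbf{Dis}_{X_1}\subseteq\mathbf{X}$ for every $(X_1,d_1)\in\mathbf{X}$; (ii) $\mathbf{P}_{\mathbf{X}}=\mathbf{Am}$.
   Context: All metric spaces are assumed to have nonempty underlying sets; $\mathbf{M}$ is the class of all metric spaces. A metric $d$ on $X$ is discrete if there is $k\in(0,\infty)$ with $d(x,y)=k$ for all distinct $x,y\in X$; $\mathbf{Dis}$ is the class of all metric spaces with discrete metric, and for a nonempty set $X_1$, $\mathbf{Dis}_{X_1}$ is the class of all metric spaces $(X_1,d)$ with $d$ a discrete metric on $X_1$. $\mathbf{F}$ is the set of all functions $f:[0,\infty)\to[0,\infty)$; $f\in\mathbf{F}$ is amenable if $f^{-1}(0)=\{0\}$, and $\mathbf{Am}$ is the set of all amenable $f\in\mathbf{F}$. For a class $\mathbf{X}$ of metric spaces, $\mathbf{P}_{\mathbf{X}}$ denotes the set of all $f\in\mathbf{F}$ such that for every metric space $(X,d)$, if $(X,d)\in\mathbf{X}$ then $(X,f\circ d)\in\mathbf{X}$ (where $f\circ d(x,y)=f(d(x,y))$; membership requires $f\circ d$ to be a metric). *)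

theory Defs
  imports Main "HOL-Library.Extended_Real" Complex_Main
begin

text \<open>To make spaces with the same carrier and same metric equal,
 d is required to be extensional: it is 0 outside X \<times> X.\<close>

definition metric_on :: "'a set \<Rightarrow> ('a \<Rightarrow> 'a \<Rightarrow> real) \<Rightarrow> bool" where
  "metric_on X d \<longleftrightarrow> X \<noteq> {}
     \<and> (\<forall>x y. (x \<notin> X \<or> y \<notin> X) \<longrightarrow> d x y = 0)
     \<and> (\<forall>x\<in>X. \<forall>y\<in>X. 0 \<le> d x y \<and> (d x y = 0 \<longleftrightarrow> x = y) \<and> d x y = d y x)
     \<and> (\<forall>x\<in>X. \<forall>y\<in>X. \<forall>z\<in>X. d x z \<le> d x y + d y z)"

definition MS :: "('a set \<times> ('a \<Rightarrow> 'a \<Rightarrow> real)) set" where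
  "MS = {(X, d). metric_on X d}"

definition Dis :: "('a set \<times> ('a \<Rightarrow> 'a \<Rightarrow> real)) set" where
  "Dis = {(X, d). metric_on X d \<and> (\<exists>k>0. \<forall>x\<in>X. \<forall>y\<in>X. x \<noteq> y \<longrightarrow> d x y = k)}"

definition Dis_on :: "'a set \<Rightarrow> ('a set \<times> ('a \<Rightarrow> 'a \<Rightarrow> real)) set" where
  "Dis_on X1 = {(X, d) \<in> Dis. X = X1}"

text \<open>Functions [0,\<infinity>) \<rightarrow> [0,\<infinity>), represented as real functions that vanish on negatives.\<close>
definition FF :: "(real \<Rightarrow> real) set" where
  "FF = {f. (\<forall>t. t < 0 \<longrightarrow> f t = 0) \<and> (\<forall>t\<ge>0. f t \<ge> 0)}"

definition Am :: "(real \<Rightarrow> real) set" where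
  "Am = {f \<in> FF. \<forall>t\<ge>0. f t = 0 \<longleftrightarrow> t = 0}"

definition P_cls :: "('a set \<times> ('a \<Rightarrow> 'a \<Rightarrow> real)) set \<Rightarrow> (real \<Rightarrow> real) set" where
  "P_cls C = {f \<in> FF. \<forall>X d. (X, d) \<in> C \<longrightarrow> (X, (\<lambda>x y. f (d x y))) \<in> C}"

end

theory Submission
  imports Defs
begin

text \<open>If \<open>f \<circ> d\<close> is a metric for every amenable \<open>f\<close>, then no triangle can have a side whose
  length occurs only once: the amenable \<open>f\<close> sending that length to 3 and all other positive
  values to 1 would violate the triangle inequality. Hence all triangles are equilateral and \<open>d\<close>
  is discrete. Conversely amenable functions turn discrete metrics into discrete metrics, and the
  step function with value \<open>k\<close> turns any metric on \<open>X\<close> into the discrete metric \<open>k\<close> on \<open>X\<close>;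
  finally the zero function preserves every metric on a one-point space but is not amenable.\<close>

lemma metric_on_nonempty: "metric_on X d \<Longrightarrow> X \<noteq> {}"
  unfolding metric_on_def by blast

lemma metric_on_eq_0_iff:
  "metric_on X d \<Longrightarrow> d x y = 0 \<longleftrightarrow> x \<notin> X \<or> y \<notin> X \<or> x = y"
  unfolding metric_on_def by blast

lemma metric_on_pos: "metric_on X d \<Longrightarrow> x \<in> X \<Longrightarrow> y \<in> X \<Longrightarrow> x \<noteq> y \<Longrightarrow> d x y > 0"
  unfolding metric_on_def by (metis order_le_less)

lemma metric_on_sym: "metric_on X d \<Longrightarrow> x \<in> X \<Longrightarrow> y \<in> X \<Longrightarrow> d x y = d y x"
  unfolding metric_on_def by blast

lemma metric_on_triangle:
  "metric_on X d \<Longrightarrow> x \<in> X \<Longrightarrow> y \<in> X \<Longrightarrow> z \<in> X \<Longrightarrow> d x z \<le> d x y + d y z"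
  unfolding metric_on_def by blast

lemma Am_iff: "f \<in> Am \<longleftrightarrow> f \<in> FF \<and> f 0 = 0 \<and> (\<forall>t>0. f t > 0)"
  unfolding Am_def FF_def by (auto simp: less_le)

definition discrete_metric :: "'a set \<Rightarrow> real \<Rightarrow> 'a \<Rightarrow> 'a \<Rightarrow> real" where
  "discrete_metric X k x y = (if x \<in> X \<and> y \<in> X \<and> x \<noteq> y then k else 0)"

lemma metric_on_discrete_metric:
  assumes "X \<noteq> {}" "k > 0"
  shows "metric_on X (discrete_metric X k)"
  unfolding metric_on_def
proof (intro conjI allI ballI impI)
  fix x y z assume "x \<in> X" "y \<in> X" "z \<in> X"
  then show "discrete_metric X k x z \<le> discrete_metric X k x y + discrete_metric X k y z"
    using assms by (cases "x = y"; cases "y = z"; cases "x = z") (simp_all add: discrete_metric_def)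
qed (use assms in \<open>auto simp: discrete_metric_def\<close>)

lemma comp_metric_eq_discrete_metric:
  assumes "metric_on X d" "f 0 = 0" "\<And>x y. x \<in> X \<Longrightarrow> y \<in> X \<Longrightarrow> x \<noteq> y \<Longrightarrow> f (d x y) = k"
  shows "(\<lambda>x y. f (d x y)) = discrete_metric X k"
proof (intro ext)
  fix x y
  show "f (d x y) = discrete_metric X k x y"
    using assms metric_on_eq_0_iff[OF assms(1), of x y] by (auto simp: discrete_metric_def)
qed

lemma Dis_iff: "(X, d) \<in> Dis \<longleftrightarrow> X \<noteq> {} \<and> (\<exists>k>0. d = discrete_metric X k)"
proof
  assume "(X, d) \<in> Dis"
  then obtain k where "metric_on X d" "k > 0" "\<forall>x\<in>X. \<forall>y\<in>X. x \<noteq> y \<longrightarrow> d x y = k"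
    unfolding Dis_def by blast
  with comp_metric_eq_discrete_metric[of X d "\<lambda>t. t" k] metric_on_nonempty
  show "X \<noteq> {} \<and> (\<exists>k>0. d = discrete_metric X k)" by auto
next
  assume "X \<noteq> {} \<and> (\<exists>k>0. d = discrete_metric X k)"
  then obtain k where X: "X \<noteq> {}" and k: "k > 0" and d: "d = discrete_metric X k" by blast
  have "\<forall>x\<in>X. \<forall>y\<in>X. x \<noteq> y \<longrightarrow> d x y = k" by (simp add: d discrete_metric_def)
  then show "(X, d) \<in> Dis"
    unfolding Dis_def using metric_on_discrete_metric[OF X k] k d by blast
qed

lemma discrete_metric_in_Dis_on: "X \<noteq> {} \<Longrightarrow> k > 0 \<Longrightarrow> (X, discrete_metric X k) \<in> Dis_on X"
  unfolding Dis_on_def Dis_iff by blast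

lemma Dis_comp_Am:
  assumes "(X, d) \<in> Dis" "f \<in> Am"
  shows "(X, \<lambda>x y. f (d x y)) \<in> Dis_on X"
proof -
  obtain k where X: "X \<noteq> {}" and k: "k > 0" and d: "d = discrete_metric X k"
    using assms(1) unfolding Dis_iff by blast
  from assms(2) k have f0: "f 0 = 0" and fk: "f k > 0" unfolding Am_iff by auto
  have "(\<lambda>x y. f (discrete_metric X k x y)) = discrete_metric X (f k)"
    using comp_metric_eq_discrete_metric[of X "discrete_metric X k" f "f k"]
      metric_on_discrete_metric[OF X k] f0 by (simp add: discrete_metric_def)
  then show ?thesis using discrete_metric_in_Dis_on[OF X fk] d by simp
qed

lemma step_comp_metric_eq_discrete_metric:
  "metric_on X d \<Longrightarrow> (\<lambda>x y. if d x y \<le> 0 then 0 else k) = discrete_metric X k"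
  using comp_metric_eq_discrete_metric[of X d "\<lambda>t. if t \<le> 0 then 0 else k" k] metric_on_pos
  by fastforce

lemma Am_comp_metric_no_unique_side:
  assumes d: "metric_on X d" and Am_comp: "\<forall>f\<in>Am. metric_on X (\<lambda>x y. f (d x y))"
    and xyz: "x \<in> X" "y \<in> X" "z \<in> X" "x \<noteq> y" "y \<noteq> z" "x \<noteq> z"
  shows "d x z = d x y \<or> d x z = d y z"
proof (rule ccontr)
  assume unique: "\<not> ?thesis"
  define f :: "real \<Rightarrow> real" where "f t = (if t \<le> 0 then 0 else if t = d x z then 3 else 1)" for t
  have "f \<in> Am" unfolding Am_def FF_def f_def by auto
  with Am_comp have "metric_on X (\<lambda>a b. f (d a b))" by blast
  then have "f (d x z) \<le> f (d x y) + f (d y z)"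
    using metric_on_triangle[OF _ xyz(1-3)] by blast
  with unique show False
    using metric_on_pos[OF d xyz(1,2,4)] metric_on_pos[OF d xyz(2,3,5)]
      metric_on_pos[OF d xyz(1,3,6)] by (simp add: f_def)
qed

lemma Dis_if_no_unique_side:
  assumes d: "metric_on X d"
    and no_unique: "\<And>x y z. \<lbrakk>x \<in> X; y \<in> X; z \<in> X; x \<noteq> y; y \<noteq> z; x \<noteq> z\<rbrakk>
                        \<Longrightarrow> d x z = d x y \<or> d x z = d y z"
  shows "(X, d) \<in> Dis"
proof (cases "\<exists>a\<in>X. \<exists>b\<in>X. a \<noteq> b")
  case True
  then obtain a b where ab: "a \<in> X" "b \<in> X" "a \<noteq> b" by blast
  have equilateral: "d x y = d x z"
    if "x \<in> X" "y \<in> X" "z \<in> X" "x \<noteq> y" "y \<noteq> z" "x \<noteq> z" for x y z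
    using no_unique[of x y z] no_unique[of y z x] no_unique[of z x y] that
      metric_on_sym[OF d] by metis
  have "d x y = d a b" if "x \<in> X" "y \<in> X" "x \<noteq> y" for x y
  proof (cases "x = a")
    case True
    then show ?thesis using equilateral[of a y b] that ab by (cases "y = b") auto
  next
    case False
    have "d x y = d x a" using equilateral[of x y a] that ab False by (cases "y = a") auto
    also have "\<dots> = d a x" using metric_on_sym[OF d] that ab by simp
    also have "\<dots> = d a b" using equilateral[of a x b] that ab False by (cases "x = b") auto
    finally show ?thesis .
  qed
  then show ?thesis using d metric_on_pos[OF d ab] unfolding Dis_def by blast
next
  case False
  then show ?thesis using d unfolding Dis_def by (auto intro: exI[of _ 1])
qed

lemma Dis_if_Am_comp_metric:
  "metric_on X d \<Longrightarrow> \<forall>f\<in>Am. metric_on X (\<lambda>x y. f (d x y)) \<Longrightarrow> (X, d) \<in> Dis"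
  using Dis_if_no_unique_side Am_comp_metric_no_unique_side by metis

lemma Am_subset_P_cls:
  assumes "C \<subseteq> Dis" "\<And>X1 d1. (X1, d1) \<in> C \<Longrightarrow> Dis_on X1 \<subseteq> C"
  shows "Am \<subseteq> P_cls C"
proof
  fix f assume f: "f \<in> Am"
  have "(X, \<lambda>x y. f (d x y)) \<in> C" if "(X, d) \<in> C" for X d
    using assms Dis_comp_Am[OF _ f, of X d] that by blast
  with f show "f \<in> P_cls C" unfolding P_cls_def Am_def by blast
qed

lemma P_cls_subset_Am:
  assumes C: "C \<subseteq> MS" and Y: "(Y, \<rho>) \<in> C" "a \<in> Y" "b \<in> Y" "a \<noteq> b"
    and discrete: "\<And>k. k > 0 \<Longrightarrow> (Y, discrete_metric Y k) \<in> C"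
  shows "P_cls C \<subseteq> Am"
proof
  fix f assume "f \<in> P_cls C"
  then have f: "f \<in> FF" and comp_metric: "\<And>d. (Y, d) \<in> C \<Longrightarrow> metric_on Y (\<lambda>x y. f (d x y))"
    using C unfolding P_cls_def MS_def by auto
  have \<rho>: "metric_on Y \<rho>" using C Y(1) unfolding MS_def by auto
  have "f (\<rho> a a) = 0" using metric_on_eq_0_iff[OF comp_metric[OF Y(1)]] by simp
  then have f0: "f 0 = 0" using metric_on_eq_0_iff[OF \<rho>, of a a] by simp
  have "f k > 0" if "k > 0" for k
  proof -
    have "f (discrete_metric Y k a b) > 0"
      using metric_on_pos[OF comp_metric[OF discrete[OF that]] Y(2-4)] by simp
    with Y show ?thesis by (simp add: discrete_metric_def)
  qed
  with f f0 show "f \<in> Am" unfolding Am_iff by blast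
qed

lemma zero_in_P_cls_if_subsingletons:
  assumes "C \<subseteq> MS" "\<And>X d. (X, d) \<in> C \<Longrightarrow> \<forall>a\<in>X. \<forall>b\<in>X. a = b"
  shows "(\<lambda>_. 0) \<in> P_cls C"
proof -
  have "d = (\<lambda>_ _. 0)" if Xd: "(X, d) \<in> C" for X d
  proof (intro ext)
    fix x y
    have "metric_on X d" using assms(1) Xd unfolding MS_def by auto
    then show "d x y = 0"
      unfolding metric_on_eq_0_iff[OF \<open>metric_on X d\<close>] using assms(2)[OF Xd] by blast
  qed
  then have "(X, \<lambda>x y. (\<lambda>_. 0) (d x y)) \<in> C" if "(X, d) \<in> C" for X d
    using that by (metis (no_types))
  then show ?thesis unfolding P_cls_def FF_def by auto
qed

theorem mainTheorem4:
  fixes C :: "('a set \<times> ('a \<Rightarrow> 'a \<Rightarrow> real)) set"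
  assumes "C \<subseteq> MS"
  shows "(C \<subseteq> Dis \<and> (\<exists>Y \<rho>. (Y, \<rho>) \<in> C \<and> (\<exists>a\<in>Y. \<exists>b\<in>Y. a \<noteq> b))
           \<and> (\<forall>X1 d1. (X1, d1) \<in> C \<longrightarrow> Dis_on X1 \<subseteq> C))
         \<longleftrightarrow> P_cls C = Am"
proof
  assume H: "C \<subseteq> Dis \<and> (\<exists>Y \<rho>. (Y, \<rho>) \<in> C \<and> (\<exists>a\<in>Y. \<exists>b\<in>Y. a \<noteq> b))
           \<and> (\<forall>X1 d1. (X1, d1) \<in> C \<longrightarrow> Dis_on X1 \<subseteq> C)"
  then obtain Y \<rho> a b where Y: "(Y, \<rho>) \<in> C" "a \<in> Y" "b \<in> Y" "a \<noteq> b" by blast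
  have "(Y, discrete_metric Y k) \<in> C" if "k > 0" for k
    using H Y discrete_metric_in_Dis_on[OF _ that, of Y] by blast
  then have "P_cls C \<subseteq> Am" by (rule P_cls_subset_Am[OF assms Y])
  moreover have "Am \<subseteq> P_cls C" using H by (intro Am_subset_P_cls) blast+
  ultimately show "P_cls C = Am" by (rule antisym)
next
  assume P: "P_cls C = Am"
  have Am_comp: "(X, \<lambda>x y. f (d x y)) \<in> C" if "f \<in> Am" "(X, d) \<in> C" for f X d
    using that P unfolding P_cls_def by blast
  have metric: "metric_on X d" if "(X, d) \<in> C" for X d
    using assms that unfolding MS_def by blast
  have "(X, d) \<in> Dis" if "(X, d) \<in> C" for X d
    using Dis_if_Am_comp_metric metric Am_comp that by blast
  then have "C \<subseteq> Dis" by auto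
  moreover have "\<exists>Y \<rho>. (Y, \<rho>) \<in> C \<and> (\<exists>a\<in>Y. \<exists>b\<in>Y. a \<noteq> b)"
  proof (rule ccontr)
    assume "\<not> ?thesis"
    then have "(\<lambda>_. 0) \<in> Am" using zero_in_P_cls_if_subsingletons[OF assms] P by blast
    then show False unfolding Am_iff by (meson less_irrefl zero_less_one)
  qed
  moreover have "Dis_on X1 \<subseteq> C" if X1: "(X1, d1) \<in> C" for X1 d1
  proof
    fix q assume "q \<in> Dis_on X1"
    then obtain k where q: "q = (X1, discrete_metric X1 k)" and k: "k > 0"
      unfolding Dis_on_def Dis_iff by blast
    have "(\<lambda>t::real. if t \<le> 0 then 0 else k) \<in> Am" using k unfolding Am_def FF_def by auto
    from Am_comp[OF this X1] show "q \<in> C"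
      unfolding q step_comp_metric_eq_discrete_metric[OF metric[OF X1]] .
  qed
  ultimately show "C \<subseteq> Dis \<and> (\<exists>Y \<rho>. (Y, \<rho>) \<in> C \<and> (\<exists>a\<in>Y. \<exists>b\<in>Y. a \<noteq> b))
           \<and> (\<forall>X1 d1. (X1, d1) \<in> C \<longrightarrow> Dis_on X1 \<subseteq> C)" by blast
qed

end
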